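(* Let $(\mathfrak g,\mu,P)$ be a Nijenhuis Lie algebra and $(M,P_M)$ a Nijenhuis representation over it, and let $\iota:\mathrm C^\bullet_{\mathrm{NjL}}(\mathfrak g,M)\hookrightarrow\mathrm C^\bullet_{\mathrm{NjL}}(\mathfrak g\ltimes M)$ be the embedding described below. Then the image $\mathrm{Im}(\iota)$ is a subcomplex of $(\mathrm C^\bullet_{\mathrm{NjL}}(\mathfrak g\ltimes M),\delta_{\mathrm{NjL}})$.
   Context: All vector spaces are over a field $\mathbf k$ of characteristic $0$. A Nijenhuis Lie algebra is a Lie algebra $(\mathfrak g,\mu=[-,-]_\mu)$ with linear $P$ satisfying $[Pa,Pb]_\mu=P([Pa,b]_\mu+[a,Pb]_\mu-P[a,b]_\mu)$; a Nijenhuis representation is a representation $M$ of $(\mathfrak g,\mu)$ with linear $P_M$ such that $P(a)P_M(x)=P_M(P(a)x+aP_M(x)-P_M(ax))$. The semidirect product $\mathfrak g\ltimes M$ is $\mathfrak g\oplus M$ with bracket $[(a,x),(b,y)]=([a,b]_\mu,ay-bx)$; with the operator $P\oplus P_M$ it is a Nijenhuis Lie algebra (and hence a Nijenhuis representation over itself via the adjoint action). For a Nijenhuis Lie algebra $\mathfrak h$ with Nijenhuis representation $N$ define: $\mathrm C^n_{\mathrm{Lie}}(\mathfrak h,N)=\mathrm{Hom}(\wedge^n\mathfrak h,N)$ with Chevalley–Eilenberg differential $\delta_{\mathrm{Lie},N}(f)(a_1,\dots,a_{n+1})=\sum_i(-1)^{i-1}a_if(\dots,\widehat{a_i},\dots)+\sum_{i<j}(-1)^{i+j}f([a_i,a_j],\dots,\widehat{a_i},\dots,\widehat{a_j},\dots)$;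 $\mathrm C^n_{\mathrm{NjO}}(\mathfrak h,N)=\mathrm{Hom}(\wedge^n\mathfrak h,N)$ with $\delta_{\mathrm{NjO},N}(f)=-P_N\circ\delta_{\mathrm{Lie},N}(f)+\partial(f)$, where $\partial(f)(a_1,\dots,a_{n+1})=\sum_i(-1)^{i-1}P(a_i)f(\dots,\widehat{a_i},\dots)+\sum_{i<j}(-1)^{i+j}f([a_i,a_j]_P,\dots,\widehat{a_i},\dots,\widehat{a_j},\dots)$ and $[a,b]_P=[Pa,b]+[a,Pb]-P[a,b]$; $\Psi_N:\mathrm C^\bullet_{\mathrm{Lie}}\to\mathrm C^\bullet_{\mathrm{NjO}}$ is $\mathrm{Id}_N$ in degree $0$ and $\Psi_N(f)(a_1,\dots,a_n)=\sum_{k=0}^n\sum_{i_1<\dots<i_k}(-1)^{n-k}P_N^{n-k}f(a_1,\dots,Pa_{i_1},\dots,Pa_{i_k},\dots,a_n)$. The complex $\mathrm C^\bullet_{\mathrm{NjL}}(\mathfrak h,N)$ has $\mathrm C^0_{\mathrm{NjL}}=\mathrm C^0_{\mathrm{Lie}}(\mathfrak h,N)$, $\mathrm C^n_{\mathrm{NjL}}=\mathrm C^n_{\mathrm{Lie}}(\mathfrak h,N)\oplus\mathrm C^{n-1}_{\mathrm{NjO}}(\mathfrak h,N)$ for $n\ge1$, and $\delta_{\mathrm{NjL},N}(f,g)=(\delta_{\mathrm{Lie},N}(f),-\Psi_N(f)-\delta_{\mathrm{NjO},N}(g))$. $\mathrm C^\bullet_{\mathrm{NjL}}(\mathfrak g\ltimes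 M)$ with differential $\delta_{\mathrm{NjL}}$ denotes this complex for $\mathfrak h=N=\mathfrak g\ltimes M$ (adjoint). The embedding $\iota$ sends a map $f:\wedge^n\mathfrak g\to M$ to $\bar f:\wedge^n(\mathfrak g\oplus M)\to\mathfrak g\oplus M$, $\bar f((a_1,x_1),\dots,(a_n,x_n))=(0,f(a_1,\dots,a_n))$ (for $n=0$, $m\in M\mapsto(0,m)$), and $\iota(f,g)=(\bar f,\bar g)$. *)

theory Defs
  imports Complex_Main "HOL-Library.Product_Plus"
begin

definition bilinear_map ::
  "('k::field \<Rightarrow> 'a::ab_group_add \<Rightarrow> 'a) \<Rightarrow> ('k \<Rightarrow> 'b::ab_group_add \<Rightarrow> 'b) \<Rightarrow>
   ('k \<Rightarrow> 'c::ab_group_add \<Rightarrow> 'c) \<Rightarrow> ('a \<Rightarrow> 'b \<Rightarrow> 'c) \<Rightarrow> bool" where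
  "bilinear_map sa sb sc m \<longleftrightarrow>
     (\<forall>b. Vector_Spaces.linear sa sc (\<lambda>a. m a b)) \<and> (\<forall>a. Vector_Spaces.linear sb sc (m a))"

definition lie_algebra :: "('k::field \<Rightarrow> 'g::ab_group_add \<Rightarrow> 'g) \<Rightarrow> ('g \<Rightarrow> 'g \<Rightarrow> 'g) \<Rightarrow> bool" where
  "lie_algebra s br \<longleftrightarrow> vector_space s \<and> bilinear_map s s s br \<and>
     (\<forall>a. br a a = 0) \<and>
     (\<forall>a b c. br a (br b c) + br b (br c a) + br c (br a b) = 0)"

definition lie_rep ::
  "('k::field \<Rightarrow> 'g::ab_group_add \<Rightarrow> 'g) \<Rightarrow> ('g \<Rightarrow> 'g \<Rightarrow> 'g) \<Rightarrow>
   ('k \<Rightarrow> 'm::ab_group_add \<Rightarrow> 'm) \<Rightarrow> ('g \<Rightarrow> 'm \<Rightarrow> 'm) \<Rightarrow> bool" where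
  "lie_rep s br sM act \<longleftrightarrow> lie_algebra s br \<and> vector_space sM \<and> bilinear_map s sM sM act \<and>
     (\<forall>a b x. act (br a b) x = act a (act b x) - act b (act a x))"

definition nijenhuis_lie_algebra ::
  "('k::field \<Rightarrow> 'g::ab_group_add \<Rightarrow> 'g) \<Rightarrow> ('g \<Rightarrow> 'g \<Rightarrow> 'g) \<Rightarrow> ('g \<Rightarrow> 'g) \<Rightarrow> bool" where
  "nijenhuis_lie_algebra s br P \<longleftrightarrow> lie_algebra s br \<and> Vector_Spaces.linear s s P \<and>
     (\<forall>a b. br (P a) (P b) = P (br (P a) b + br a (P b) - P (br a b)))"

definition nijenhuis_rep ::
  "('k::field \<Rightarrow> 'g::ab_group_add \<Rightarrow> 'g) \<Rightarrow> ('g \<Rightarrow> 'g \<Rightarrow> 'g) \<Rightarrow> ('g \<Rightarrow> 'g) \<Rightarrow>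
   ('k \<Rightarrow> 'm::ab_group_add \<Rightarrow> 'm) \<Rightarrow> ('g \<Rightarrow> 'm \<Rightarrow> 'm) \<Rightarrow> ('m \<Rightarrow> 'm) \<Rightarrow> bool" where
  "nijenhuis_rep s br P sM act PM \<longleftrightarrow> nijenhuis_lie_algebra s br P \<and> lie_rep s br sM act \<and>
     Vector_Spaces.linear sM sM PM \<and>
     (\<forall>a x. act (P a) (PM x) = PM (act (P a) x + act a (PM x) - PM (act a x)))"

definition sd_br :: "('g \<Rightarrow> 'g \<Rightarrow> 'g) \<Rightarrow> ('g \<Rightarrow> 'm::ab_group_add \<Rightarrow> 'm) \<Rightarrow>
    'g \<times> 'm \<Rightarrow> 'g \<times> 'm \<Rightarrow> 'g \<times> 'm" where
  "sd_br br act p q = (br (fst p) (fst q), act (fst p) (snd q) - act (fst q) (snd p))"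

definition sd_P :: "('g \<Rightarrow> 'g) \<Rightarrow> ('m \<Rightarrow> 'm) \<Rightarrow> 'g \<times> 'm \<Rightarrow> 'g \<times> 'm" where
  "sd_P P PM p = (P (fst p), PM (snd p))"

text \<open>An n-cochain in Hom(wedge^n h, N) is represented as a function on lists,
  multilinear and alternating on lists of length n and zero on lists of other lengths.\<close>

definition cochains ::
  "('k::field \<Rightarrow> 'h::ab_group_add \<Rightarrow> 'h) \<Rightarrow> ('k \<Rightarrow> 'n::ab_group_add \<Rightarrow> 'n) \<Rightarrow> nat \<Rightarrow> ('h list \<Rightarrow> 'n) set" where
  "cochains s sN n = {f.
     (\<forall>xs. length xs \<noteq> n \<longrightarrow> f xs = 0) \<and>
     (\<forall>xs i. length xs = n \<longrightarrow> i < n \<longrightarrow> Vector_Spaces.linear s sN (\<lambda>y. f (xs[i := y]))) \<and>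
     (\<forall>xs i j. length xs = n \<longrightarrow> i < j \<longrightarrow> j < n \<longrightarrow> xs ! i = xs ! j \<longrightarrow> f xs = 0)}"

definition alt_sign :: "nat \<Rightarrow> 'a::ab_group_add \<Rightarrow> 'a" where
  "alt_sign i x = (if even i then x else - x)"

definition del_nth :: "nat \<Rightarrow> 'a list \<Rightarrow> 'a list" where
  "del_nth i xs = take i xs @ drop (Suc i) xs"

text \<open>Chevalley--Eilenberg differential C^n \<rightarrow> C^(n+1) (0-based indices).\<close>
definition delta_Lie :: "('h \<Rightarrow> 'h \<Rightarrow> 'h) \<Rightarrow> ('h \<Rightarrow> 'n::ab_group_add \<Rightarrow> 'n) \<Rightarrow> nat \<Rightarrow>
    ('h list \<Rightarrow> 'n) \<Rightarrow> 'h list \<Rightarrow> 'n" where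
  "delta_Lie br act n f xs =
     (if length xs = Suc n then
        (\<Sum>i<Suc n. alt_sign i (act (xs ! i) (f (del_nth i xs)))) +
        (\<Sum>j<Suc n. \<Sum>i<j. alt_sign (i + j) (f (br (xs ! i) (xs ! j) # del_nth i (del_nth j xs))))
      else 0)"

definition br_P :: "('h::ab_group_add \<Rightarrow> 'h \<Rightarrow> 'h) \<Rightarrow> ('h \<Rightarrow> 'h) \<Rightarrow> 'h \<Rightarrow> 'h \<Rightarrow> 'h" where
  "br_P br P a b = br (P a) b + br a (P b) - P (br a b)"

definition delta_NjO :: "('h::ab_group_add \<Rightarrow> 'h \<Rightarrow> 'h) \<Rightarrow> ('h \<Rightarrow> 'n::ab_group_add \<Rightarrow> 'n) \<Rightarrow>
    ('h \<Rightarrow> 'h) \<Rightarrow> ('n \<Rightarrow> 'n) \<Rightarrow> nat \<Rightarrow> ('h list \<Rightarrow> 'n) \<Rightarrow> 'h list \<Rightarrow> 'n" where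
  "delta_NjO br act P PN n f xs =
     (if length xs = Suc n then
        - PN (delta_Lie br act n f xs) + delta_Lie (br_P br P) (\<lambda>a. act (P a)) n f xs
      else 0)"

definition apply_at :: "('h \<Rightarrow> 'h) \<Rightarrow> nat set \<Rightarrow> 'h list \<Rightarrow> 'h list" where
  "apply_at P S xs = map (\<lambda>(i, x). if i \<in> S then P x else x) (zip [0..<length xs] xs)"

definition Psi :: "('h \<Rightarrow> 'h) \<Rightarrow> ('n::ab_group_add \<Rightarrow> 'n) \<Rightarrow> nat \<Rightarrow> ('h list \<Rightarrow> 'n) \<Rightarrow> 'h list \<Rightarrow> 'n" where
  "Psi P PN n f xs =
     (if length xs = n then
        (\<Sum>S\<in>Pow {..<n}. alt_sign (n - card S) ((PN ^^ (n - card S)) (f (apply_at P S xs))))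
      else 0)"

text \<open>C^n_NjL = C^n_Lie (+) C^(n-1)_NjO for n \<ge> 1 and C^0_NjL = C^0_Lie
  (the second component is then required to be 0).\<close>
definition NjL_cochains ::
  "('k::field \<Rightarrow> 'h::ab_group_add \<Rightarrow> 'h) \<Rightarrow> ('k \<Rightarrow> 'n::ab_group_add \<Rightarrow> 'n) \<Rightarrow> nat \<Rightarrow>
   (('h list \<Rightarrow> 'n) \<times> ('h list \<Rightarrow> 'n)) set" where
  "NjL_cochains s sN n = {(f, g). f \<in> cochains s sN n \<and>
     (if n = 0 then g = (\<lambda>_. 0) else g \<in> cochains s sN (n - 1))}"

definition delta_NjL :: "('h::ab_group_add \<Rightarrow> 'h \<Rightarrow> 'h) \<Rightarrow> ('h \<Rightarrow> 'n::ab_group_add \<Rightarrow> 'n) \<Rightarrow>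
    ('h \<Rightarrow> 'h) \<Rightarrow> ('n \<Rightarrow> 'n) \<Rightarrow> nat \<Rightarrow> ('h list \<Rightarrow> 'n) \<times> ('h list \<Rightarrow> 'n) \<Rightarrow>
    ('h list \<Rightarrow> 'n) \<times> ('h list \<Rightarrow> 'n)" where
  "delta_NjL br act P PN n fg =
     (delta_Lie br act n (fst fg),
      \<lambda>xs. - Psi P PN n (fst fg) xs
            - (if n = 0 then 0 else delta_NjO br act P PN (n - 1) (snd fg) xs))"

definition iota_map :: "('g list \<Rightarrow> 'm) \<Rightarrow> ('g \<times> 'm) list \<Rightarrow> 'g::zero \<times> 'm" where
  "iota_map f xs = (0, f (map fst xs))"

definition iota :: "('g list \<Rightarrow> 'm) \<times> ('g list \<Rightarrow> 'm) \<Rightarrow>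
    (('g \<times> 'm) list \<Rightarrow> 'g::zero \<times> 'm) \<times> (('g \<times> 'm) list \<Rightarrow> 'g \<times> 'm)" where
  "iota fg = (iota_map (fst fg), iota_map (snd fg))"

end

theory Submission
  imports Defs "HOL-Library.Disjoint_Sets" "HOL-Combinatorics.Transposition"
begin

(* The witness is y = delta_NjL x, the differential of x in the complex of g with coefficients
   in M.  In g \<ltimes> M the bracket with an element of M lands in M, P \<oplus> P_M preserves M, and an
   embedded cochain only sees the g-components of its arguments; hence every term of the
   differential of iota x is the embedding of the corresponding term for x, i.e. the differentials
   commute with iota.  It remains that delta_Lie, Psi and delta_NjO send alternating multilinear
   cochains to such cochains, for which bilinearity and [a, a] = 0 suffice.  Given multilinearity,
   alternation only has to be checked on arguments with two equal adjacent entries a, a: there the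
   terms of delta_Lie cancel in pairs, and those of Psi cancel under the involution of the index
   sets S that exchanges the two positions. *)

lemmas linear_map_0 = module_hom.zero[OF module_hom_linearI]
lemmas linear_map_add = module_hom.add[OF module_hom_linearI]
lemmas linear_map_neg = module_hom.neg[OF module_hom_linearI]

lemma linear_map_vector_spaces:
  "Vector_Spaces.linear s1 s2 f \<Longrightarrow> vector_space s1 \<and> vector_space s2"
  by (simp add: Vector_Spaces.linear_iff)

lemma linear_map_compose:
  "Vector_Spaces.linear s1 s2 f \<Longrightarrow> Vector_Spaces.linear s2 s3 g \<Longrightarrow>
   Vector_Spaces.linear s1 s3 (\<lambda>x. g (f x))"
  using Vector_Spaces.linear_compose[of s1 s2 f s3 g] by (simp add: o_def)

lemma linear_map_compose_add:
  "Vector_Spaces.linear s1 s2 f \<Longrightarrow> Vector_Spaces.linear s1 s2 g \<Longrightarrow>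
   Vector_Spaces.linear s1 s2 (\<lambda>x. f x + g x)"
  by (simp add: linear_iff_module_hom module_hom_iff module.scale_right_distrib)

lemma linear_map_compose_neg:
  "Vector_Spaces.linear s1 s2 f \<Longrightarrow> Vector_Spaces.linear s1 s2 (\<lambda>x. - f x)"
  by (simp add: linear_iff_module_hom module_hom_iff module.scale_minus_right)

lemma linear_map_compose_sub:
  "Vector_Spaces.linear s1 s2 f \<Longrightarrow> Vector_Spaces.linear s1 s2 g \<Longrightarrow>
   Vector_Spaces.linear s1 s2 (\<lambda>x. f x - g x)"
  by (simp add: linear_iff_module_hom module_hom_iff module.scale_right_diff_distrib)

lemma linear_map_compose_sum:
  "vector_space s1 \<Longrightarrow> vector_space s2 \<Longrightarrow> (\<And>a. a \<in> A \<Longrightarrow> Vector_Spaces.linear s1 s2 (F a)) \<Longrightarrow>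
   Vector_Spaces.linear s1 s2 (\<lambda>x. \<Sum>a\<in>A. F a x)"
  using vector_space_pair.linear_compose_sum[of s1 s2 A F] by (simp add: vector_space_pair_def)

lemma linear_map_compose_alt_sign:
  "Vector_Spaces.linear s1 s2 f \<Longrightarrow> Vector_Spaces.linear s1 s2 (\<lambda>x. alt_sign i (f x))"
  by (cases "even i") (simp_all add: alt_sign_def linear_map_compose_neg)

lemma linear_map_funpow:
  assumes "Vector_Spaces.linear s s f" shows "Vector_Spaces.linear s s (f ^^ m)"
proof (induction m)
  case 0
  have "vector_space s" using assms by (simp add: Vector_Spaces.linear_iff)
  then show ?case
    by (simp add: id_def linear_iff_module_hom module.module_hom_ident module_iff_vector_space)
next
  case (Suc m)
  then show ?case using linear_map_compose[OF Suc assms] by (simp add: o_def)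
qed

lemma bilinear_map_linear_left: "bilinear_map sa sb sc m \<Longrightarrow> Vector_Spaces.linear sa sc (\<lambda>a. m a b)"
  by (simp add: bilinear_map_def)

lemma bilinear_map_linear_right: "bilinear_map sa sb sc m \<Longrightarrow> Vector_Spaces.linear sb sc (m a)"
  by (simp add: bilinear_map_def)

lemma bilinear_map_antisym:
  assumes bil: "bilinear_map s s s br" and alt: "\<And>a. br a a = 0"
  shows "br y x = - br x y"
proof -
  note add_left = linear_map_add[OF bilinear_map_linear_left[OF bil]]
    and add_right = linear_map_add[OF bilinear_map_linear_right[OF bil]]
  have "0 = br (x + y) (x + y)" by (simp only: alt)
  also have "\<dots> = br x x + br y x + (br x y + br y y)" by (simp only: add_left add_right)
  finally show ?thesis by (simp add: alt eq_neg_iff_add_eq_0 add.commute)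
qed

lemma alt_sign_minus: "alt_sign i (- x) = - alt_sign i x"
  by (simp add: alt_sign_def)

lemma alt_sign_Suc: "alt_sign (Suc i) x = - alt_sign i x"
  by (simp add: alt_sign_def)

lemma alt_sign_0 [simp]: "alt_sign i 0 = 0"
  by (simp add: alt_sign_def)

lemma length_del_nth [simp]: "i < length xs \<Longrightarrow> length (del_nth i xs) = length xs - 1"
  by (simp add: del_nth_def)

lemma nth_del_nth:
  "i < length xs \<Longrightarrow> k < length xs - 1 \<Longrightarrow> del_nth i xs ! k = (if k < i then xs ! k else xs ! Suc k)"
  by (auto simp: del_nth_def nth_append min_def)

lemma map_del_nth: "map f (del_nth i xs) = del_nth i (map f xs)"
  by (simp add: del_nth_def take_map drop_map)

lemma del_nth_append:
  "del_nth i (xs @ ys) = (if i < length xs then del_nth i xs @ ys else xs @ del_nth (i - length xs) ys)"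
  by (simp add: del_nth_def Suc_diff_le)

lemma del_nth_Cons_0 [simp]: "del_nth 0 (x # xs) = xs"
  by (simp add: del_nth_def)

lemma del_nth_Cons_Suc [simp]: "del_nth (Suc i) (x # xs) = x # del_nth i xs"
  by (simp add: del_nth_def)

lemma del_nth_adjacent_repeat:
  assumes "i \<noteq> length us" "i \<noteq> Suc (length us)"
  obtains us' ws' where "del_nth i (us @ a # a # ws) = us' @ a # a # ws'"
    and "length us' = (if i < length us then length us - 1 else length us)"
proof (cases "i < length us")
  case True
  then show ?thesis using that[of "del_nth i us" ws] by (simp add: del_nth_append)
next
  case False
  define m where "m = i - length us - 2"
  have "i = length us + Suc (Suc m)"
    using assms False unfolding m_def by arith
  then show ?thesis using that[of us "del_nth m ws"] by (simp add: del_nth_append)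
qed

lemma del_nth_del_nth_adjacent_repeat:
  assumes "i < j" "i \<noteq> length us" "i \<noteq> Suc (length us)" "j \<noteq> length us" "j \<noteq> Suc (length us)"
  obtains us' ws' where "del_nth i (del_nth j (us @ a # a # ws)) = us' @ a # a # ws'"
proof -
  obtain us'' ws'' where del_j: "del_nth j (us @ a # a # ws) = us'' @ a # a # ws''"
    and len: "length us'' = (if j < length us then length us - 1 else length us)"
    using del_nth_adjacent_repeat[of j us a ws] assms by blast
  have "i \<noteq> length us''" "i \<noteq> Suc (length us'')"
    using assms len by (auto split: if_splits)
  then show ?thesis
    using del_nth_adjacent_repeat[of i us'' a ws''] that unfolding del_j by blast
qed

lemma del_nth_list_update_same: "del_nth i (xs[i := y]) = del_nth i xs"
  by (simp add: del_nth_def)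

lemma del_nth_list_update:
  "i < length xs \<Longrightarrow> k < length xs \<Longrightarrow> k \<noteq> i \<Longrightarrow>
   del_nth i (xs[k := y]) = (del_nth i xs)[(if k < i then k else k - 1) := y]"
  by (cases "k < i") (auto intro!: nth_equalityI simp: nth_del_nth nth_list_update)

lemma length_apply_at [simp]: "length (apply_at P S xs) = length xs"
  by (simp add: apply_at_def)

lemma nth_apply_at: "i < length xs \<Longrightarrow> apply_at P S xs ! i = (if i \<in> S then P (xs ! i) else xs ! i)"
  by (simp add: apply_at_def)

lemma apply_at_list_update:
  "k < length xs \<Longrightarrow> apply_at P S (xs[k := y]) = (apply_at P S xs)[k := (if k \<in> S then P y else y)]"
  by (auto intro!: nth_equalityI simp: nth_apply_at nth_list_update)

lemma map_fst_apply_at_sd_P: "map fst (apply_at (sd_P P PM) S xs) = apply_at P S (map fst xs)"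
  by (auto intro!: nth_equalityI simp: nth_apply_at sd_P_def)

lemma apply_at_transpose_image:
  assumes "Suc p < length xs" and "xs ! p = xs ! Suc p"
  shows "apply_at P (Transposition.transpose p (Suc p) ` S) xs
    = (apply_at P S xs)[p := apply_at P S xs ! Suc p, Suc p := apply_at P S xs ! p]"
proof (rule nth_equalityI)
  fix i assume "i < length (apply_at P (Transposition.transpose p (Suc p) ` S) xs)"
  with assms show "apply_at P (Transposition.transpose p (Suc p) ` S) xs ! i
    = (apply_at P S xs)[p := apply_at P S xs ! Suc p, Suc p := apply_at P S xs ! p] ! i"
    by (cases "i = p \<or> i = Suc p") (auto simp: nth_list_update nth_apply_at in_transpose_image_iff)
qed simp

lemma split_list_at_two_indices:
  assumes "i < j" "j < length xs"
  shows "xs = take i xs @ xs ! i # take (j - Suc i) (drop (Suc i) xs) @ xs ! j # drop (Suc j) xs"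
proof -
  have "drop (Suc i) xs = take (j - Suc i) (drop (Suc i) xs) @ drop j xs"
    using assms by (metis Suc_leI append_take_drop_id drop_drop le_add_diff_inverse2)
  moreover have "drop j xs = xs ! j # drop (Suc j) xs"
    using assms by (simp add: Cons_nth_drop_Suc)
  ultimately show ?thesis
    using id_take_nth_drop[of i xs] assms by simp
qed

lemma split_list_at_adjacent:
  assumes "Suc p < length xs"
  obtains us x y ws where "xs = us @ x # y # ws" and "length us = p"
  using split_list_at_two_indices[of p "Suc p" xs] assms that by simp

definition multilinear ::
  "('k::field \<Rightarrow> 'h::ab_group_add \<Rightarrow> 'h) \<Rightarrow> ('k \<Rightarrow> 'n::ab_group_add \<Rightarrow> 'n) \<Rightarrow> nat \<Rightarrow> ('h list \<Rightarrow> 'n) \<Rightarrow> bool"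
  where "multilinear s sN n f \<longleftrightarrow>
    (\<forall>xs i. length xs = n \<longrightarrow> i < n \<longrightarrow> Vector_Spaces.linear s sN (\<lambda>y. f (xs[i := y])))"

lemma multilinear_slot:
  assumes "multilinear s sN n f" and "length us + Suc (length ws) = n"
  shows "Vector_Spaces.linear s sN (\<lambda>y. f (us @ y # ws))"
  using assms unfolding multilinear_def
  by (auto dest!: spec[of _ "us @ undefined # ws"] spec[of _ "length us"] simp: list_update_append)

lemma multilinear_swap_adjacent:
  assumes ml: "multilinear s sN n f" and rep: "\<And>c. f (us @ c # c # ws) = 0"
    and len: "length us + Suc (Suc (length ws)) = n"
  shows "f (us @ b # a # ws) = - f (us @ a # b # ws)"
proof -
  define h where "h u v = f (us @ u # v # ws)" for u v
  have add_left: "h (u + u') v = h u v + h u' v" for u u' v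
    using linear_map_add[OF multilinear_slot[OF ml, of us "v # ws"]] len by (simp add: h_def)
  have add_right: "h u (v + v') = h u v + h u v'" for u v v'
    using linear_map_add[OF multilinear_slot[OF ml, of "us @ [u]" ws]] len by (simp add: h_def)
  have "0 = h (a + b) (a + b)" by (simp add: h_def rep)
  also have "\<dots> = h a a + h b a + (h a b + h b b)" by (simp only: add_left add_right)
  finally show ?thesis by (simp add: h_def rep eq_neg_iff_add_eq_0)
qed

lemma multilinear_move_right:
  assumes ml: "multilinear s sN n f"
    and rep: "\<And>us c ws. length (us @ c # c # ws) = n \<Longrightarrow> f (us @ c # c # ws) = 0"
  shows "length (us @ a # vs @ ws) = n \<Longrightarrow>
    f (us @ a # vs @ ws) = alt_sign (length vs) (f (us @ vs @ a # ws))"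
proof (induction vs arbitrary: us)
  case Nil
  then show ?case by (simp add: alt_sign_def)
next
  case (Cons v vs)
  have "f (us @ a # v # vs @ ws) = - f (us @ v # a # vs @ ws)"
    using multilinear_swap_adjacent[OF ml, of us "vs @ ws" v a] rep Cons.prems by simp
  also have "f (us @ v # a # vs @ ws) = alt_sign (length vs) (f ((us @ [v]) @ vs @ a # ws))"
    using Cons.IH[of "us @ [v]"] Cons.prems by simp
  finally show ?case by (simp add: alt_sign_Suc)
qed

lemma cochainsI_adjacent:
  assumes zero: "\<And>xs. length xs \<noteq> n \<Longrightarrow> f xs = 0" and ml: "multilinear s sN n f"
    and rep: "\<And>us a ws. length (us @ a # a # ws) = n \<Longrightarrow> f (us @ a # a # ws) = 0"
  shows "f \<in> cochains s sN n"
proof -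
  have "f xs = 0" if len: "length xs = n" and ij: "i < j" "j < n" and eq: "xs ! i = xs ! j" for xs i j
  proof -
    define us vs ws a where "us = take i xs" and "vs = take (j - Suc i) (drop (Suc i) xs)"
      and "ws = drop (Suc j) xs" and "a = xs ! j"
    have xs: "xs = us @ a # vs @ a # ws"
      using split_list_at_two_indices[of i j xs] ij eq len unfolding us_def vs_def ws_def a_def by simp
    have "f xs = alt_sign (length vs) (f (us @ vs @ a # a # ws))"
      using multilinear_move_right[OF ml rep, of us a vs "a # ws"] len by (simp add: xs)
    also have "\<dots> = 0"
      using rep[of "us @ vs" a ws] len by (simp add: xs)
    finally show ?thesis .
  qed
  with zero ml show ?thesis by (auto simp: cochains_def multilinear_def)
qed

lemma cochains_multilinear: "f \<in> cochains s sN n \<Longrightarrow> multilinear s sN n f"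
  by (simp add: cochains_def multilinear_def)

lemma cochains_zero: "f \<in> cochains s sN n \<Longrightarrow> length xs \<noteq> n \<Longrightarrow> f xs = 0"
  by (simp add: cochains_def)

lemma cochains_linear:
  "f \<in> cochains s sN n \<Longrightarrow> length xs = n \<Longrightarrow> i < n \<Longrightarrow> Vector_Spaces.linear s sN (\<lambda>y. f (xs[i := y]))"
  by (simp add: cochains_def)

lemma cochains_nth_eq:
  assumes "f \<in> cochains s sN n" and "i < j" "j < length xs" "xs ! i = xs ! j"
  shows "f xs = 0"
  using assms by (cases "length xs = n") (auto simp: cochains_def)

lemma cochains_adjacent_repeat: "f \<in> cochains s sN n \<Longrightarrow> f (us @ a # a # ws) = 0"
  by (rule cochains_nth_eq[of _ _ _ _ "length us" "Suc (length us)"]) (simp_all add: nth_append)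

lemma cochains_zero_entry:
  assumes "f \<in> cochains s sN n" shows "f (us @ 0 # ws) = 0"
proof (cases "length us + Suc (length ws) = n")
  case True
  show ?thesis by (rule linear_map_0[OF multilinear_slot[OF cochains_multilinear[OF assms] True]])
qed (simp add: cochains_zero[OF assms])

lemma cochains_swap_adjacent:
  assumes f: "f \<in> cochains s sN n" and p: "Suc p < length xs"
  shows "f (xs[p := xs ! Suc p, Suc p := xs ! p]) = - f xs"
proof -
  obtain us x y ws where xs: "xs = us @ x # y # ws" and len_us: "length us = p"
    using split_list_at_adjacent[OF p] .
  have "f (us @ y # x # ws) = - f (us @ x # y # ws)"
  proof (cases "length us + Suc (Suc (length ws)) = n")
    case True
    show ?thesis
      by (rule multilinear_swap_adjacent[OF cochains_multilinear[OF f] cochains_adjacent_repeat[OF f]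
            True])
  qed (simp add: cochains_zero[OF f])
  then show ?thesis by (simp add: xs len_us[symmetric] list_update_append nth_append)
qed

lemma cochains_add: "f \<in> cochains s sN n \<Longrightarrow> g \<in> cochains s sN n \<Longrightarrow> (\<lambda>xs. f xs + g xs) \<in> cochains s sN n"
  by (auto simp: cochains_def intro: linear_map_compose_add)

lemma cochains_neg: "f \<in> cochains s sN n \<Longrightarrow> (\<lambda>xs. - f xs) \<in> cochains s sN n"
  by (auto simp: cochains_def intro: linear_map_compose_neg)

lemma cochains_diff: "f \<in> cochains s sN n \<Longrightarrow> g \<in> cochains s sN n \<Longrightarrow> (\<lambda>xs. f xs - g xs) \<in> cochains s sN n"
  by (auto simp: cochains_def intro: linear_map_compose_sub)

lemma cochains_compose_linear:
  assumes "f \<in> cochains s sN n" and lin: "Vector_Spaces.linear sN sN' L"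
  shows "(\<lambda>xs. L (f xs)) \<in> cochains s sN' n"
  using assms(1) by (auto simp: cochains_def linear_map_0[OF lin] intro!: linear_map_compose[OF _ lin])

lemma delta_Lie_act_term_linear:
  assumes bil_act: "bilinear_map s sN sN act" and f: "f \<in> cochains s sN n"
    and len: "length xs = Suc n" and k: "k < Suc n" and i: "i < Suc n"
  shows "Vector_Spaces.linear s sN (\<lambda>y. act (xs[k := y] ! i) (f (del_nth i (xs[k := y]))))"
proof (cases "i = k")
  case True
  then show ?thesis using len k
    by (simp add: del_nth_list_update_same bilinear_map_linear_left[OF bil_act])
next
  case False
  let ?k' = "if k < i then k else k - 1"
  have "Vector_Spaces.linear s sN (\<lambda>y. f ((del_nth i xs)[?k' := y]))"
    using cochains_linear[OF f, of "del_nth i xs" ?k'] len k i False by auto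
  with False show ?thesis using len k i
    by (simp add: del_nth_list_update linear_map_compose[OF _ bilinear_map_linear_right[OF bil_act]])
qed

lemma delta_Lie_bracket_term_linear:
  assumes bil_br: "bilinear_map s s s br" and f: "f \<in> cochains s sN n"
    and len: "length xs = Suc n" and k: "k < Suc n" and ij: "i < j" "j < Suc n"
  shows "Vector_Spaces.linear s sN
    (\<lambda>y. f (br (xs[k := y] ! i) (xs[k := y] ! j) # del_nth i (del_nth j (xs[k := y]))))"
proof -
  let ?L = "del_nth i (del_nth j xs)"
  have len_L: "length (x # ?L) = n" for x using ij len by simp
  have head: "Vector_Spaces.linear s sN (\<lambda>y. f (y # ?L))"
    using cochains_linear[OF f len_L, of 0] ij by simp
  consider "k = i" | "k = j" | "k \<noteq> i" "k \<noteq> j" by blast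
  then show ?thesis
  proof cases
    case 1
    then show ?thesis using ij len
      by (simp add: del_nth_list_update del_nth_list_update_same
          linear_map_compose[OF bilinear_map_linear_left[OF bil_br] head])
  next
    case 2
    then show ?thesis using ij len
      by (simp add: del_nth_list_update_same
          linear_map_compose[OF bilinear_map_linear_right[OF bil_br] head])
  next
    case 3
    define k1 where "k1 = (if k < j then k else k - 1)"
    define k2 where "k2 = (if k1 < i then k1 else k1 - 1)"
    have k1: "k1 \<noteq> i" "k1 < n" using 3 ij k unfolding k1_def by auto
    have k2: "Suc k2 < n" using k1 ij unfolding k2_def by auto
    have "del_nth i (del_nth j (xs[k := y])) = ?L[k2 := y]" for y
      using 3 ij len k k1 by (simp add: del_nth_list_update k1_def[symmetric] k2_def[symmetric])
    then show ?thesis using 3 cochains_linear[OF f len_L k2] ij len by simp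
  qed
qed

lemma delta_Lie_multilinear:
  fixes br :: "'h::ab_group_add \<Rightarrow> 'h \<Rightarrow> 'h" and act :: "'h \<Rightarrow> 'n::ab_group_add \<Rightarrow> 'n"
  assumes bil_br: "bilinear_map s s s br" and bil_act: "bilinear_map s sN sN act"
    and f: "f \<in> cochains s sN n"
  shows "multilinear s sN (Suc n) (delta_Lie br act n f)"
  unfolding multilinear_def
proof (intro allI impI)
  fix xs :: "'h list" and k
  assume len: "length xs = Suc n" and k: "k < Suc n"
  have vs: "vector_space s" "vector_space sN"
    using linear_map_vector_spaces[OF bilinear_map_linear_left[OF bil_act]] by simp_all
  show "Vector_Spaces.linear s sN (\<lambda>y. delta_Lie br act n f (xs[k := y]))"
    unfolding delta_Lie_def length_list_update len simp_thms(6) if_True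
    by (intro linear_map_compose_add linear_map_compose_sum vs linear_map_compose_alt_sign
        delta_Lie_act_term_linear[OF bil_act f len k] delta_Lie_bracket_term_linear[OF bil_br f len k])
      auto
qed

lemma delta_Lie_act_part_adjacent_repeat:
  assumes bil_act: "bilinear_map s sN sN act" and f: "f \<in> cochains s sN n"
    and xs: "xs = us @ a # a # ws" and len: "length xs = Suc n"
  shows "(\<Sum>i<Suc n. alt_sign i (act (xs ! i) (f (del_nth i xs)))) = 0"
proof -
  define p where "p = length us"
  define T where "T i = alt_sign i (act (xs ! i) (f (del_nth i xs)))" for i
  have p: "Suc p < Suc n" using xs len by (simp add: p_def)
  have outside: "T i = 0" if i: "i \<noteq> p" "i \<noteq> Suc p" for i
  proof -
    obtain us' ws' where "del_nth i xs = us' @ a # a # ws'"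
      using del_nth_adjacent_repeat[of i us a ws] i unfolding xs p_def by blast
    then show ?thesis
      by (simp add: T_def cochains_adjacent_repeat[OF f]
          linear_map_0[OF bilinear_map_linear_right[OF bil_act]])
  qed
  have "(\<Sum>i<Suc n. T i) = (\<Sum>i\<in>{p, Suc p}. T i)"
    by (rule sum.mono_neutral_right) (use p outside in auto)
  also have "\<dots> = 0"
    by (simp add: T_def xs p_def nth_append del_nth_append alt_sign_Suc)
  finally show ?thesis by (simp add: T_def)
qed

lemma delta_Lie_bracket_part_adjacent_repeat:
  assumes alt: "\<And>c. br c c = 0" and f: "f \<in> cochains s sN n"
    and xs: "xs = us @ a # a # ws" and len: "length xs = Suc n"
  shows "(\<Sum>j<Suc n. \<Sum>i<j. alt_sign (i + j) (f (br (xs ! i) (xs ! j) # del_nth i (del_nth j xs)))) = 0"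
proof -
  define p where "p = length us"
  define T where "T i j = alt_sign (i + j) (f (br (xs ! i) (xs ! j) # del_nth i (del_nth j xs)))" for i j
  have p: "Suc p < Suc n" using xs len by (simp add: p_def)
  have at_p: "xs ! p = a" "xs ! Suc p = a" "del_nth (Suc p) xs = del_nth p xs"
    by (simp_all add: xs p_def nth_append del_nth_append)
  have outside: "T i j = 0" if ij: "i < j" "i \<noteq> p" "i \<noteq> Suc p" "j \<noteq> p" "j \<noteq> Suc p" for i j
  proof -
    obtain us' ws' where "del_nth i (del_nth j xs) = us' @ a # a # ws'"
      using del_nth_del_nth_adjacent_repeat[of i j us a ws] ij unfolding xs p_def by blast
    then show ?thesis
      using cochains_adjacent_repeat[OF f, of "_ # us'"] by (simp add: T_def)
  qed
  have inner: "(\<Sum>i<j. T i j) = 0" if j: "j \<noteq> p" "j \<noteq> Suc p" for j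
  proof (cases "j < p")
    case True
    then show ?thesis using j outside by (intro sum.neutral) auto
  next
    case False
    then have "Suc p < j" using j by simp
    have "(\<Sum>i<j. T i j) = (\<Sum>i\<in>{p, Suc p}. T i j)"
      by (rule sum.mono_neutral_right) (use \<open>Suc p < j\<close> j outside in auto)
    moreover obtain us' ws' where "del_nth j xs = us' @ a # a # ws'" and "length us' = p"
      using del_nth_adjacent_repeat[of j us a ws] \<open>Suc p < j\<close> unfolding xs p_def by auto
    then have "del_nth (Suc p) (del_nth j xs) = del_nth p (del_nth j xs)"
      by (simp add: del_nth_append)
    ultimately show ?thesis by (simp add: T_def at_p alt_sign_Suc)
  qed
  have "(\<Sum>j<Suc n. \<Sum>i<j. T i j) = (\<Sum>j\<in>{p, Suc p}. \<Sum>i<j. T i j)"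
    by (rule sum.mono_neutral_right) (use p inner in auto)
  \<comment> \<open>the terms T i p and T i (Suc p) cancel, and T p (Suc p) involves br a a = 0\<close>
  also have "\<dots> = (\<Sum>i<p. T i p + T i (Suc p)) + T p (Suc p)"
    by (simp add: sum.distrib)
  also have "\<dots> = 0"
    using cochains_zero_entry[OF f, of "[]"] by (simp add: T_def at_p alt alt_sign_Suc)
  finally show ?thesis by (simp add: T_def)
qed

lemma delta_Lie_cochains:
  assumes bil_br: "bilinear_map s s s br" and bil_act: "bilinear_map s sN sN act"
    and alt: "\<And>c. br c c = 0" and f: "f \<in> cochains s sN n"
  shows "delta_Lie br act n f \<in> cochains s sN (Suc n)"
proof (rule cochainsI_adjacent)
  show "delta_Lie br act n f xs = 0" if "length xs \<noteq> Suc n" for xs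
    using that by (simp add: delta_Lie_def)
  show "multilinear s sN (Suc n) (delta_Lie br act n f)"
    by (rule delta_Lie_multilinear[OF bil_br bil_act f])
  show "delta_Lie br act n f (us @ a # a # ws) = 0" if "length (us @ a # a # ws) = Suc n" for us a ws
    unfolding delta_Lie_def
    using delta_Lie_act_part_adjacent_repeat[OF bil_act f refl that]
      delta_Lie_bracket_part_adjacent_repeat[where br = br, OF alt f refl that] that
    by simp
qed

lemma Psi_multilinear:
  fixes P :: "'h::ab_group_add \<Rightarrow> 'h" and f :: "'h list \<Rightarrow> 'n::ab_group_add"
  assumes linP: "Vector_Spaces.linear s s P" and linPM: "Vector_Spaces.linear sN sN PM"
    and f: "f \<in> cochains s sN n"
  shows "multilinear s sN n (Psi P PM n f)"
  unfolding multilinear_def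
proof (intro allI impI)
  fix xs :: "'h list" and k
  assume len: "length xs = n" and k: "k < n"
  have vs: "vector_space s" "vector_space sN"
    using linear_map_vector_spaces[OF linPM] linear_map_vector_spaces[OF linP] by simp_all
  have entry: "Vector_Spaces.linear s sN
      (\<lambda>y. f ((apply_at P S xs)[k := (if k \<in> S then P y else y)]))" for S
  proof -
    have lin: "Vector_Spaces.linear s sN (\<lambda>y. f ((apply_at P S xs)[k := y]))"
      using cochains_linear[OF f, of "apply_at P S xs" k] len k by simp
    then show ?thesis using linear_map_compose[OF linP lin] by (cases "k \<in> S") simp_all
  qed
  show "Vector_Spaces.linear s sN (\<lambda>y. Psi P PM n f (xs[k := y]))"
    unfolding Psi_def length_list_update len simp_thms(6) if_True apply_at_list_update[OF k[folded len]]
    by (intro linear_map_compose_sum vs linear_map_compose_alt_sign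
        linear_map_compose[OF entry linear_map_funpow[OF linPM]])
qed

lemma Psi_adjacent_repeat:
  fixes P :: "'h::ab_group_add \<Rightarrow> 'h" and f :: "'h list \<Rightarrow> 'n::ab_group_add"
  assumes linPM: "Vector_Spaces.linear sN sN PM" and f: "f \<in> cochains s sN n"
    and xs: "xs = us @ a # a # ws" and len: "length xs = n"
  shows "Psi P PM n f xs = 0"
proof -
  define p where "p = length us"
  define \<tau> where "\<tau> = Transposition.transpose p (Suc p)"
  define t where "t S = alt_sign (n - card S) ((PM ^^ (n - card S)) (f (apply_at P S xs)))" for S
  define X where "X = {S \<in> Pow {..<n}. \<tau> ` S \<noteq> S}"
  have p: "Suc p < n" using xs len by (simp add: p_def)
  have at_p: "xs ! p = xs ! Suc p" by (simp add: xs p_def nth_append)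
  have fixed: "t S = 0" if "\<tau> ` S = S" for S
  proof -
    have "p \<in> S \<longleftrightarrow> Suc p \<in> S" using that in_transpose_image_iff[of p p "Suc p" S] by (simp add: \<tau>_def)
    then have "f (apply_at P S xs) = 0"
      using p len by (intro cochains_nth_eq[OF f, of p "Suc p"]) (simp_all add: nth_apply_at at_p)
    then show ?thesis by (simp add: t_def linear_map_0[OF linear_map_funpow[OF linPM]])
  qed
  have swapped: "t (\<tau> ` S) + t S = 0" for S
  proof -
    have "f (apply_at P (\<tau> ` S) xs) = - f (apply_at P S xs)"
      using apply_at_transpose_image[of p xs P S] cochains_swap_adjacent[OF f, of p "apply_at P S xs"]
        p len at_p
      by (simp add: \<tau>_def)
    moreover have "card (\<tau> ` S) = card S" by (simp add: \<tau>_def card_image)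
    ultimately show ?thesis
      by (simp add: t_def linear_map_neg[OF linear_map_funpow[OF linPM]] alt_sign_minus)
  qed
  have "Psi P PM n f xs = (\<Sum>S\<in>Pow {..<n}. t S)" by (simp add: Psi_def len t_def)
  also have "\<dots> = (\<Sum>S\<in>X. t S)"
    by (rule sum.mono_neutral_right) (auto simp: X_def fixed)
  also have "\<dots> = 0"
  proof (rule sum_involution_eq_0[where h = "image \<tau>"])
    fix S assume S: "S \<in> X"
    show "t (\<tau> ` S) + t S = 0" by (rule swapped)
    show \<tau>\<tau>: "\<tau> ` \<tau> ` S = S" by (simp add: image_image \<tau>_def)
    show "\<tau> ` S \<noteq> S" using S by (simp add: X_def)
    have "\<tau> i < n" if "i < n" for i using that p by (simp add: \<tau>_def transpose_def)
    with S \<tau>\<tau> show "\<tau> ` S \<in> X" by (auto simp: X_def)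
  qed
  finally show ?thesis .
qed

lemma Psi_cochains:
  assumes linP: "Vector_Spaces.linear s s P" and linPM: "Vector_Spaces.linear sN sN PM"
    and f: "f \<in> cochains s sN n"
  shows "Psi P PM n f \<in> cochains s sN n"
proof (rule cochainsI_adjacent)
  show "Psi P PM n f xs = 0" if "length xs \<noteq> n" for xs
    using that by (simp add: Psi_def)
  show "multilinear s sN n (Psi P PM n f)"
    by (rule Psi_multilinear[OF linP linPM f])
  show "Psi P PM n f (us @ a # a # ws) = 0" if "length (us @ a # a # ws) = n" for us a ws
    by (rule Psi_adjacent_repeat[OF linPM f refl that])
qed

lemma bilinear_map_br_P:
  assumes bil: "bilinear_map s s s br" and linP: "Vector_Spaces.linear s s P"
  shows "bilinear_map s s s (br_P br P)"
  unfolding bilinear_map_def br_P_def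
  by (intro allI conjI linear_map_compose_sub linear_map_compose_add
      linear_map_compose[OF linP bilinear_map_linear_left[OF bil]] bilinear_map_linear_left[OF bil]
      linear_map_compose[OF bilinear_map_linear_left[OF bil] linP]
      linear_map_compose[OF linP bilinear_map_linear_right[OF bil]] bilinear_map_linear_right[OF bil]
      linear_map_compose[OF bilinear_map_linear_right[OF bil] linP])

lemma br_P_self:
  assumes bil: "bilinear_map s s s br" and alt: "\<And>c. br c c = 0" and linP: "Vector_Spaces.linear s s P"
  shows "br_P br P c c = 0"
  using bilinear_map_antisym[OF bil alt, of c "P c"] by (simp add: br_P_def alt linear_map_0[OF linP])

lemma delta_NjO_cochains:
  assumes bil_br: "bilinear_map s s s br" and bil_act: "bilinear_map s sN sN act"
    and alt: "\<And>c. br c c = 0"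
    and linP: "Vector_Spaces.linear s s P" and linPM: "Vector_Spaces.linear sN sN PM"
    and f: "f \<in> cochains s sN n"
  shows "delta_NjO br act P PM n f \<in> cochains s sN (Suc n)"
proof -
  have "delta_NjO br act P PM n f =
      (\<lambda>xs. - PM (delta_Lie br act n f xs) + delta_Lie (br_P br P) (\<lambda>a. act (P a)) n f xs)"
    by (simp add: fun_eq_iff delta_NjO_def delta_Lie_def linear_map_0[OF linPM])
  moreover have "bilinear_map s sN sN (\<lambda>a. act (P a))"
    unfolding bilinear_map_def
    by (intro allI conjI linear_map_compose[OF linP bilinear_map_linear_left[OF bil_act]]
        bilinear_map_linear_right[OF bil_act])
  ultimately show ?thesis
    by (simp only: cochains_add cochains_neg cochains_compose_linear[OF _ linPM]
        delta_Lie_cochains[OF bil_br bil_act alt f]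
        delta_Lie_cochains[OF bilinear_map_br_P[OF bil_br linP] _ br_P_self[OF bil_br alt linP] f])
qed

lemma delta_NjL_NjL_cochains:
  assumes bil_br: "bilinear_map s s s br" and bil_act: "bilinear_map s sN sN act"
    and alt: "\<And>c. br c c = 0"
    and linP: "Vector_Spaces.linear s s P" and linPM: "Vector_Spaces.linear sN sN PM"
    and x: "x \<in> NjL_cochains s sN n"
  shows "delta_NjL br act P PM n x \<in> NjL_cochains s sN (Suc n)"
proof -
  obtain f g where x_fg: "x = (f, g)" by fastforce
  have f: "f \<in> cochains s sN n" using x by (simp add: x_fg NjL_cochains_def)
  have Psi: "(\<lambda>xs. - Psi P PM n f xs) \<in> cochains s sN n"
    by (rule cochains_neg[OF Psi_cochains[OF linP linPM f]])
  have "(\<lambda>xs. - Psi P PM n f xs - (if n = 0 then 0 else delta_NjO br act P PM (n - 1) g xs))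
      \<in> cochains s sN n"
  proof (cases n)
    case 0
    then show ?thesis using Psi by simp
  next
    case (Suc m)
    then have "g \<in> cochains s sN m" using x by (simp add: x_fg NjL_cochains_def)
    then have "delta_NjO br act P PM m g \<in> cochains s sN n"
      using delta_NjO_cochains[OF bil_br bil_act alt linP linPM] Suc by simp
    then show ?thesis using cochains_diff[OF Psi] Suc by simp
  qed
  then show ?thesis
    unfolding x_fg delta_NjL_def fst_conv snd_conv
    by (simp add: NjL_cochains_def delta_Lie_cochains[OF bil_br bil_act alt f])
qed

lemma fst_alt_sign: "fst (alt_sign i p) = alt_sign i (fst p)"
  by (simp add: alt_sign_def)

lemma snd_alt_sign: "snd (alt_sign i p) = alt_sign i (snd p)"
  by (simp add: alt_sign_def)

lemma delta_Lie_iota_map: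
  fixes B A :: "'g::ab_group_add \<times> 'm::ab_group_add \<Rightarrow> 'g \<times> 'm \<Rightarrow> 'g \<times> 'm"
  assumes fst_B: "\<And>p q. fst (B p q) = b (fst p) (fst q)"
    and A_0: "\<And>p v. A p (0, v) = (0, a (fst p) v)"
  shows "delta_Lie B A n (iota_map f) = iota_map (delta_Lie b a n f)"
proof (rule ext)
  fix xs :: "('g \<times> 'm) list"
  show "delta_Lie B A n (iota_map f) xs = iota_map (delta_Lie b a n f) xs"
    by (cases "length xs = Suc n")
      (simp_all add: delta_Lie_def iota_map_def prod_eq_iff fst_sum snd_sum fst_alt_sign snd_alt_sign
        fst_B A_0 map_del_nth cong: sum.cong_simp)
qed

lemma funpow_sd_P: "P 0 = 0 \<Longrightarrow> (sd_P P PM ^^ m) (0, v) = (0, (PM ^^ m) v)"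
  by (induction m) (simp_all add: sd_P_def)

lemma Psi_iota_map:
  fixes P :: "'g::ab_group_add \<Rightarrow> 'g" and PM :: "'m::ab_group_add \<Rightarrow> 'm"
  assumes "P 0 = 0"
  shows "Psi (sd_P P PM) (sd_P P PM) n (iota_map f) = iota_map (Psi P PM n f)"
proof (rule ext)
  fix xs :: "('g \<times> 'm) list"
  show "Psi (sd_P P PM) (sd_P P PM) n (iota_map f) xs = iota_map (Psi P PM n f) xs"
    by (cases "length xs = n")
      (simp_all add: Psi_def iota_map_def prod_eq_iff fst_sum snd_sum fst_alt_sign snd_alt_sign
        map_fst_apply_at_sd_P funpow_sd_P[where P = P, OF assms])
qed

lemma delta_NjO_iota_map:
  assumes P_0: "P 0 = 0" and br_0: "\<And>c. br c 0 = 0" and act_0: "\<And>v. act 0 v = 0"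
  shows "delta_NjO (sd_br br act) (sd_br br act) (sd_P P PM) (sd_P P PM) n (iota_map f)
    = iota_map (delta_NjO br act P PM n f)"
proof -
  have "delta_Lie (sd_br br act) (sd_br br act) n (iota_map f) = iota_map (delta_Lie br act n f)"
    by (rule delta_Lie_iota_map) (simp_all add: sd_br_def br_0 act_0)
  moreover have
    "delta_Lie (br_P (sd_br br act) (sd_P P PM)) (\<lambda>p. sd_br br act (sd_P P PM p)) n (iota_map f)
      = iota_map (delta_Lie (br_P br P) (\<lambda>a. act (P a)) n f)"
    by (rule delta_Lie_iota_map) (simp_all add: sd_br_def sd_P_def br_P_def br_0 act_0)
  ultimately show ?thesis
    by (simp add: fun_eq_iff delta_NjO_def iota_map_def sd_P_def P_0 zero_prod_def)
qed

lemma delta_NjL_iota: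
  assumes P_0: "P 0 = 0" and br_0: "\<And>c. br c 0 = 0" and act_0: "\<And>v. act 0 v = 0"
  shows "delta_NjL (sd_br br act) (sd_br br act) (sd_P P PM) (sd_P P PM) n (iota x)
    = iota (delta_NjL br act P PM n x)"
proof -
  have "delta_Lie (sd_br br act) (sd_br br act) n (iota_map f) = iota_map (delta_Lie br act n f)" for f
    by (rule delta_Lie_iota_map) (simp_all add: sd_br_def br_0 act_0)
  then show ?thesis
    unfolding iota_def delta_NjL_def fst_conv snd_conv Psi_iota_map[where P = P, OF P_0]
      delta_NjO_iota_map[where P = P and br = br and act = act, OF P_0 br_0 act_0]
    by (simp add: fun_eq_iff iota_map_def)
qed

theorem proposition6p5:
  fixes s :: "'k::field_char_0 \<Rightarrow> 'g::ab_group_add \<Rightarrow> 'g"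
    and br :: "'g \<Rightarrow> 'g \<Rightarrow> 'g" and P :: "'g \<Rightarrow> 'g"
    and sM :: "'k \<Rightarrow> 'm::ab_group_add \<Rightarrow> 'm"
    and act :: "'g \<Rightarrow> 'm \<Rightarrow> 'm" and PM :: "'m \<Rightarrow> 'm"
    and n :: nat
  assumes "nijenhuis_lie_algebra s br P"
    and "nijenhuis_rep s br P sM act PM"
    and "x \<in> NjL_cochains s sM n"
  shows "\<exists>y \<in> NjL_cochains s sM (Suc n).
           delta_NjL (sd_br br act) (sd_br br act) (sd_P P PM) (sd_P P PM) n (iota x) = iota y"
proof
  \<comment> \<open>the first assumption is part of the second one\<close>
  have linP: "Vector_Spaces.linear s s P" and linPM: "Vector_Spaces.linear sM sM PM"
    and bil_br: "bilinear_map s s s br" and bil_act: "bilinear_map s sM sM act"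
    and alt: "\<And>c. br c c = 0"
    using assms(2)
    by (simp_all add: nijenhuis_rep_def nijenhuis_lie_algebra_def lie_rep_def lie_algebra_def)
  show "delta_NjL br act P PM n x \<in> NjL_cochains s sM (Suc n)"
    by (rule delta_NjL_NjL_cochains[OF bil_br bil_act alt linP linPM assms(3)])
  show "delta_NjL (sd_br br act) (sd_br br act) (sd_P P PM) (sd_P P PM) n (iota x)
      = iota (delta_NjL br act P PM n x)"
    by (rule delta_NjL_iota)
      (simp_all add: linear_map_0[OF linP] linear_map_0[OF bilinear_map_linear_right[OF bil_br]]
        linear_map_0[OF bilinear_map_linear_left[OF bil_act]])
qed

end
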